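(* Let $k\ge 2$ and let $G_1,\dots,G_k$ be vertex-disjoint graphs, $G_i$ of order $n_i\ge 3$, such that $G_1$ and $G_k$ each have at least one vertex of degree $n_i-1$ (adjacent to all other vertices of $G_i$), and each $G_i$ with $2\le i\le k-1$ has at least two vertices of degree $n_i-1$. Let $S(G_1,\dots,G_k)$ be the graph obtained from the disjoint union $G_1\cup\cdots\cup G_k$ by adding, for each $2\le i\le k$, one edge $e_i$ joining a vertex of degree $n_{i-1}-1$ in $G_{i-1}$ to a vertex of degree $n_i-1$ in $G_i$. Then $$D(S(G_1,\dots,G_k),x)=\prod_{i=1}^k D(G_i,x).$$ In particular, if $G_i=K_{n_i}$ with $n_i\ge 3$ for all $i$, then $D(S(K_{n_1},\dots,K_{n_k}),x)=\prod_{i=1}^k\big((1+x)^{n_i}-1\big)$.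
   Context: All graphs are finite and simple. For a graph $G$, a set $S\subseteq V(G)$ is dominating if every vertex of $V(G)\setminus S$ is adjacent to some vertex of $S$. Let $d(G,i)$ be the number of dominating sets of $G$ of cardinality $i$; the domination polynomial is $D(G,x)=\sum_{i=1}^{|V(G)|} d(G,i)x^i$. *)

theory Defs
  imports "HOL-Computational_Algebra.Polynomial"
begin

definition graph :: "'a set \<Rightarrow> 'a set set \<Rightarrow> bool" where
  "graph V E \<longleftrightarrow> finite V \<and> (\<forall>e\<in>E. e \<subseteq> V \<and> card e = 2)"

definition vdegree :: "'a set \<Rightarrow> 'a set set \<Rightarrow> 'a \<Rightarrow> nat" where
  "vdegree V E v = card {u \<in> V. {u, v} \<in> E}"

definition dominating :: "'a set \<Rightarrow> 'a set set \<Rightarrow> 'a set \<Rightarrow> bool" where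
  "dominating V E S \<longleftrightarrow> S \<subseteq> V \<and> (\<forall>v \<in> V - S. \<exists>u \<in> S. {u, v} \<in> E)"

definition dom_count :: "'a set \<Rightarrow> 'a set set \<Rightarrow> nat \<Rightarrow> nat" where
  "dom_count V E i = card {S. dominating V E S \<and> card S = i}"

definition dom_poly :: "'a set \<Rightarrow> 'a set set \<Rightarrow> int poly" where
  "dom_poly V E = (\<Sum>i = 1..card V. monom (int (dom_count V E i)) i)"

definition complete_edges :: "'a set \<Rightarrow> 'a set set" where
  "complete_edges V = {e. e \<subseteq> V \<and> card e = 2}"

text \<open>The graph S(G_1,...,G_k): vertices of the union, edges of the union plus
  the edges e_i = {a i, b i} for 2 <= i <= k, with a i in G_(i-1) and b i in G_i.\<close>
definition chain_vertices :: "nat \<Rightarrow> (nat \<Rightarrow> 'a set) \<Rightarrow> 'a set" where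
  "chain_vertices k V = (\<Union>i\<in>{1..k}. V i)"

definition chain_edges :: "nat \<Rightarrow> (nat \<Rightarrow> 'a set set) \<Rightarrow> (nat \<Rightarrow> 'a) \<Rightarrow> (nat \<Rightarrow> 'a) \<Rightarrow> 'a set set" where
  "chain_edges k E a b = (\<Union>i\<in>{1..k}. E i) \<union> (\<lambda>i. {a i, b i}) ` {2..k}"

end

theory Submission
  imports Defs "HOL-Library.FuncSet" "HOL-Library.Disjoint_Sets"
begin

text \<open>Call a vertex of a part a port if it has a neighbour outside its part. If every port
  is adjacent to all other vertices of its part and every part has a vertex that is not a
  port, then a set S dominates the whole graph iff each of its traces on the parts dominates
  that part: a port outside S sees the non-port part of the graph only through a vertex of its
  own part, and S must meet every part because the non-port vertex has to be dominated inside.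
  Dominating sets therefore correspond bijectively to tuples of dominating sets of the parts,
  with additive sizes, and the domination polynomial factorises. In S(G_1,...,G_k) the ports of
  G_i are among the (universal) endpoints of e_i and e_(i+1), and n_i \<ge> 3 leaves a non-port.\<close>

lemma dominating_finite: "finite V \<Longrightarrow> finite {S. dominating V E S}"
  unfolding dominating_def by (rule finite_subset[of _ "Pow V"]) auto

lemma dom_poly_eq_sum_dominating:
  assumes "finite V" and "V \<noteq> {}"
  shows "dom_poly V E = (\<Sum>S | dominating V E S. [:0, 1:] ^ card S)"
proof -
  let ?D = "{S. dominating V E S}"
  have card_range: "card ` ?D \<subseteq> {0..card V}"
    using assms(1) by (auto simp: dominating_def intro: card_mono)
  have no_empty: "dom_count V E 0 = 0"
  proof -
    have "S \<noteq> {}" if "dominating V E S" for S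
      using that assms(2) by (auto simp: dominating_def)
    moreover have "finite S" if "dominating V E S" for S
      using that assms(1) by (auto simp: dominating_def intro: finite_subset)
    ultimately have "{S. dominating V E S \<and> card S = 0} = {}" by (auto simp: card_eq_0_iff)
    then show ?thesis unfolding dom_count_def by (metis card.empty)
  qed
  have "(\<Sum>S\<in>?D. [:0, 1:] ^ card S)
      = (\<Sum>i = 0..card V. \<Sum>S | S \<in> ?D \<and> card S = i. [:0, 1:] ^ card S)"
    by (rule sum.group[OF dominating_finite[OF assms(1)] _ card_range, symmetric]) simp
  also have "\<dots> = (\<Sum>i = 0..card V. of_nat (dom_count V E i) * [:0, 1:] ^ i)"
    by (simp add: dom_count_def)
  also have "\<dots> = (\<Sum>i = 0..card V. monom (int (dom_count V E i)) i)"
    by (simp add: monom_altdef of_nat_poly)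
  also have "\<dots> = dom_poly V E"
    by (simp add: dom_poly_def sum.atLeast_Suc_atMost no_empty)
  finally show ?thesis by simp
qed

lemma full_degree_adjacent:
  assumes "graph V E" and "v \<in> V" and "vdegree V E v = card V - 1"
    and "w \<in> V" and "w \<noteq> v"
  shows "{w, v} \<in> E"
proof -
  have "finite V" using assms(1) by (simp add: graph_def)
  have nbrs_sub: "{u \<in> V. {u, v} \<in> E} \<subseteq> V - {v}"
    using assms(1) by (auto simp: graph_def)
  have "card {u \<in> V. {u, v} \<in> E} = card (V - {v})"
    using assms(2,3) \<open>finite V\<close> by (simp add: vdegree_def)
  then have "{u \<in> V. {u, v} \<in> E} = V - {v}"
    using card_subset_eq[OF _ nbrs_sub] \<open>finite V\<close> by auto
  then show ?thesis using assms(4,5) by auto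
qed

lemma dom_poly_complete_edges:
  assumes "finite V" and "V \<noteq> {}"
  shows "dom_poly V (complete_edges V) = [:1, 1:] ^ card V - 1"
proof -
  have dominating_sets: "{S. dominating V (complete_edges V) S} = Pow V - {{}}"
  proof (intro set_eqI iffI)
    fix S assume "S \<in> Pow V - {{}}"
    then obtain u where "u \<in> S" "S \<subseteq> V" by auto
    then show "S \<in> {S. dominating V (complete_edges V) S}"
      by (force simp: dominating_def complete_edges_def card_insert_if)
  qed (use assms(2) in \<open>auto simp: dominating_def\<close>)
  have "[:1, 1:] ^ card V = ([:0, 1:] + 1) ^ card V" by (simp add: one_pCons)
  also have "\<dots> = (\<Sum>S\<in>Pow V. [:0, 1:] ^ card S)"
    using prod_add[OF assms(1), of "\<lambda>_. [:0, 1:]" "\<lambda>_. 1"] by simp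
  also have "\<dots> = 1 + (\<Sum>S\<in>Pow V - {{}}. [:0, 1:] ^ card S)"
    using assms(1) by (subst sum.remove[of _ "{}"]) auto
  finally show ?thesis
    using dom_poly_eq_sum_dominating[OF assms] dominating_sets by (metis add_diff_cancel_left')
qed

lemma sum_power_card_disjoint_Union:
  fixes x :: "'b :: comm_semiring_1"
  assumes "finite I" and "\<And>i. i \<in> I \<Longrightarrow> finite (V i)" and disj: "disjoint_family_on V I"
  shows "(\<Sum>S | S \<subseteq> (\<Union>i\<in>I. V i) \<and> (\<forall>i\<in>I. P i (S \<inter> V i)). x ^ card S)
       = (\<Prod>i\<in>I. \<Sum>T | T \<subseteq> V i \<and> P i T. x ^ card T)"
proof -
  define D where "D i = {T. T \<subseteq> V i \<and> P i T}" for i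
  have trace: "(\<Union>j\<in>I. g j) \<inter> V i = g i" if "g \<in> PiE I D" "i \<in> I" for g i
    using that disjoint_family_onD[OF disj] by (fastforce simp: D_def)
  have "bij_betw (\<lambda>g. \<Union>i\<in>I. g i) (PiE I D)
      {S. S \<subseteq> (\<Union>i\<in>I. V i) \<and> (\<forall>i\<in>I. P i (S \<inter> V i))}"
  proof (rule bij_betw_byWitness[where f' = "\<lambda>S. restrict (\<lambda>i. S \<inter> V i) I"])
    show "\<forall>g\<in>PiE I D. restrict (\<lambda>i. (\<Union>j\<in>I. g j) \<inter> V i) I = g"
    proof
      fix g assume g: "g \<in> PiE I D"
      then have "restrict (\<lambda>i. (\<Union>j\<in>I. g j) \<inter> V i) I = restrict g I"
        using trace by (intro restrict_ext) simp
      then show "restrict (\<lambda>i. (\<Union>j\<in>I. g j) \<inter> V i) I = g"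
        using g by (simp add: PiE_restrict)
    qed
    show "(\<lambda>g. \<Union>i\<in>I. g i) ` PiE I D \<subseteq> {S. S \<subseteq> (\<Union>i\<in>I. V i) \<and> (\<forall>i\<in>I. P i (S \<inter> V i))}"
    proof safe
      fix g i assume "g \<in> PiE I D" "i \<in> I"
      then have "g i \<in> D i" by (rule PiE_mem)
      then show "P i ((\<Union>j\<in>I. g j) \<inter> V i)"
        using trace \<open>g \<in> PiE I D\<close> \<open>i \<in> I\<close> by (simp add: D_def)
    qed (force simp: D_def dest: PiE_mem)
    show "(\<lambda>S. restrict (\<lambda>i. S \<inter> V i) I) ` {S. S \<subseteq> (\<Union>i\<in>I. V i) \<and> (\<forall>i\<in>I. P i (S \<inter> V i))}
        \<subseteq> PiE I D"
      by (auto simp: D_def)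
  qed auto
  then have "(\<Sum>S | S \<subseteq> (\<Union>i\<in>I. V i) \<and> (\<forall>i\<in>I. P i (S \<inter> V i)). x ^ card S)
      = (\<Sum>g\<in>PiE I D. x ^ card (\<Union>i\<in>I. g i))"
    by (rule sum.reindex_bij_betw[symmetric])
  also have "\<dots> = (\<Sum>g\<in>PiE I D. \<Prod>i\<in>I. x ^ card (g i))"
  proof (rule sum.cong[OF refl])
    fix g assume g: "g \<in> PiE I D"
    have parts: "g i \<subseteq> V i" if "i \<in> I" for i
      using PiE_mem[OF g that] by (simp add: D_def)
    have "disjoint_family_on g I"
      using disj parts by (fastforce simp: disjoint_family_on_def)
    moreover have "finite (g i)" if "i \<in> I" for i
      using parts[OF that] assms(2)[OF that] by (rule finite_subset)
    ultimately show "x ^ card (\<Union>i\<in>I. g i) = (\<Prod>i\<in>I. x ^ card (g i))"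
      by (simp add: card_UN_disjoint' assms(1) power_sum)
  qed
  also have "\<dots> = (\<Prod>i\<in>I. \<Sum>T\<in>D i. x ^ card T)"
  proof (rule prod_sum_PiE[OF assms(1), symmetric])
    show "finite (D i)" if "i \<in> I" for i
      using assms(2)[OF that] by (auto simp: D_def intro: finite_subset[of _ "Pow (V i)"])
  qed
  finally show ?thesis by (simp add: D_def)
qed

context
  fixes I :: "'i set" and V :: "'i \<Rightarrow> 'a set" and E :: "'i \<Rightarrow> 'a set set" and E' :: "'a set set"
  assumes graphs: "\<And>i. i \<in> I \<Longrightarrow> graph (V i) (E i)"
    and parts_disjoint: "disjoint_family_on V I"
    and part_edges: "\<And>i. i \<in> I \<Longrightarrow> E i \<subseteq> E'"
    and inner_edges: "\<And>i u v. i \<in> I \<Longrightarrow> u \<in> V i \<Longrightarrow> v \<in> V i \<Longrightarrow> {u, v} \<in> E' \<Longrightarrow> {u, v} \<in> E i"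
    and ports_universal: "\<And>i u v w. i \<in> I \<Longrightarrow> v \<in> V i \<Longrightarrow> u \<notin> V i \<Longrightarrow> {u, v} \<in> E' \<Longrightarrow>
        w \<in> V i \<Longrightarrow> w \<noteq> v \<Longrightarrow> {w, v} \<in> E i"
    and non_port: "\<And>i. i \<in> I \<Longrightarrow> \<exists>w\<in>V i. \<forall>u. {u, w} \<in> E' \<longrightarrow> u \<in> V i"
begin

lemma dominating_iff_dominating_parts:
  "dominating (\<Union>i\<in>I. V i) E' S \<longleftrightarrow>
    S \<subseteq> (\<Union>i\<in>I. V i) \<and> (\<forall>i\<in>I. dominating (V i) (E i) (S \<inter> V i))"
proof
  assume dom: "dominating (\<Union>i\<in>I. V i) E' S"
  show "S \<subseteq> (\<Union>i\<in>I. V i) \<and> (\<forall>i\<in>I. dominating (V i) (E i) (S \<inter> V i))"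
  proof (intro conjI ballI)
    show "S \<subseteq> (\<Union>i\<in>I. V i)" using dom by (simp add: dominating_def)
  next
    fix i assume i: "i \<in> I"
    have dominated: "\<exists>u\<in>S. {u, v} \<in> E'" if "v \<in> V i - S" for v
      using dom that i by (auto simp: dominating_def)
    have "S \<inter> V i \<noteq> {}"
    proof -
      obtain w where "w \<in> V i" and w: "\<forall>u. {u, w} \<in> E' \<longrightarrow> u \<in> V i"
        using non_port[OF i] by blast
      then show ?thesis using dominated[of w] by blast
    qed
    then obtain s where s: "s \<in> S" "s \<in> V i" by blast
    have "\<exists>u\<in>S \<inter> V i. {u, v} \<in> E i" if v: "v \<in> V i - S" for v
    proof -
      obtain u where u: "u \<in> S" "{u, v} \<in> E'" using dominated[OF v] by blast
      show ?thesis
      proof (cases "u \<in> V i")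
        case True
        then show ?thesis using u v inner_edges[OF i] by blast
      next
        case False
        then have "{s, v} \<in> E i" using ports_universal[OF i _ _ u(2) s(2)] v s(1) by blast
        then show ?thesis using s by blast
      qed
    qed
    then show "dominating (V i) (E i) (S \<inter> V i)" by (auto simp: dominating_def)
  qed
next
  assume "S \<subseteq> (\<Union>i\<in>I. V i) \<and> (\<forall>i\<in>I. dominating (V i) (E i) (S \<inter> V i))"
  then show "dominating (\<Union>i\<in>I. V i) E' S"
    using part_edges by (fastforce simp: dominating_def)
qed

lemma dom_poly_parts_prod:
  assumes "finite I" and "I \<noteq> {}"
  shows "dom_poly (\<Union>i\<in>I. V i) E' = (\<Prod>i\<in>I. dom_poly (V i) (E i))"
proof -
  have fin: "finite (V i)" and nonempty: "V i \<noteq> {}" if "i \<in> I" for i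
    using graphs[OF that] non_port[OF that] by (auto simp: graph_def)
  have "dom_poly (\<Union>i\<in>I. V i) E' = (\<Sum>S | dominating (\<Union>i\<in>I. V i) E' S. [:0, 1:] ^ card S)"
    using assms fin nonempty by (intro dom_poly_eq_sum_dominating) auto
  also have "\<dots> = (\<Sum>S | S \<subseteq> (\<Union>i\<in>I. V i) \<and> (\<forall>i\<in>I. dominating (V i) (E i) (S \<inter> V i)).
      [:0, 1:] ^ card S)"
    by (simp only: dominating_iff_dominating_parts)
  also have "\<dots> = (\<Prod>i\<in>I. \<Sum>T | T \<subseteq> V i \<and> dominating (V i) (E i) T. [:0, 1:] ^ card T)"
    using assms(1) fin parts_disjoint by (rule sum_power_card_disjoint_Union)
  also have "\<dots> = (\<Prod>i\<in>I. dom_poly (V i) (E i))"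
    using fin nonempty
    by (intro prod.cong refl) (auto simp: dom_poly_eq_sum_dominating dominating_def)
  finally show ?thesis .
qed

end

locale graph_chain =
  fixes k :: nat and V :: "nat \<Rightarrow> 'a set" and E :: "nat \<Rightarrow> 'a set set" and a b :: "nat \<Rightarrow> 'a"
  assumes graphs: "\<And>i. i \<in> {1..k} \<Longrightarrow> graph (V i) (E i)"
    and parts_disjoint: "\<And>i j. i \<in> {1..k} \<Longrightarrow> j \<in> {1..k} \<Longrightarrow> i \<noteq> j \<Longrightarrow> V i \<inter> V j = {}"
    and a_in: "\<And>i. i \<in> {2..k} \<Longrightarrow> a i \<in> V (i - 1)"
    and b_in: "\<And>i. i \<in> {2..k} \<Longrightarrow> b i \<in> V i"
begin

lemma part_of_vertex_unique: "v \<in> V i \<Longrightarrow> v \<in> V j \<Longrightarrow> i \<in> {1..k} \<Longrightarrow> j \<in> {1..k} \<Longrightarrow> i = j"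
  using parts_disjoint by blast

lemma chain_edge_inner:
  assumes "i \<in> {1..k}" and "u \<in> V i" and "v \<in> V i" and "{u, v} \<in> chain_edges k E a b"
  shows "{u, v} \<in> E i"
  using assms(4) unfolding chain_edges_def
proof (elim UnE UN_E imageE)
  fix j assume j: "j \<in> {1..k}" "{u, v} \<in> E j"
  then have "u \<in> V j" using graphs[OF j(1)] by (auto simp: graph_def)
  then show "{u, v} \<in> E i"
    using part_of_vertex_unique assms(1,2) j by blast
next
  fix j assume j: "j \<in> {2..k}" "{u, v} = {a j, b j}"
  have "a j \<in> {u, v}" "b j \<in> {u, v}" using j(2) by auto
  then have "a j \<in> V i" "b j \<in> V i" using assms(2,3) by auto
  have "j - 1 = i"
    by (rule part_of_vertex_unique[OF a_in[OF j(1)] \<open>a j \<in> V i\<close>]) (use j(1) assms(1) in auto)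
  moreover have "j = i"
    by (rule part_of_vertex_unique[OF b_in[OF j(1)] \<open>b j \<in> V i\<close>]) (use j(1) assms(1) in auto)
  ultimately show "{u, v} \<in> E i" using j(1) by auto
qed

lemma chain_edge_port:
  assumes "i \<in> {1..k}" and "v \<in> V i" and "u \<notin> V i" and "{u, v} \<in> chain_edges k E a b"
  shows "(i + 1 \<in> {2..k} \<and> v = a (i + 1)) \<or> (i \<in> {2..k} \<and> v = b i)"
  using assms(4) unfolding chain_edges_def
proof (elim UnE UN_E imageE)
  fix j assume j: "j \<in> {1..k}" "{u, v} \<in> E j"
  then have "u \<in> V j" "v \<in> V j" using graphs[OF j(1)] by (auto simp: graph_def)
  then show ?thesis
    using part_of_vertex_unique assms(1-3) j(1) by blast
next
  fix j assume j: "j \<in> {2..k}" "{u, v} = {a j, b j}"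
  then have "v = a j \<or> v = b j" by (auto simp: doubleton_eq_iff)
  then show ?thesis
  proof
    assume "v = a j"
    then have "j - 1 = i"
      using part_of_vertex_unique[of v "j - 1" i] a_in[OF j(1)] assms(1,2) j(1) by force
    then show ?thesis using \<open>v = a j\<close> j(1) by auto
  next
    assume "v = b j"
    then have "j = i" using part_of_vertex_unique b_in[OF j(1)] assms(1,2) j(1) by auto
    then show ?thesis using \<open>v = b j\<close> j(1) by auto
  qed
qed

lemma dom_poly_chain:
  assumes "k \<ge> 1"
    and three: "\<And>i. i \<in> {1..k} \<Longrightarrow> card (V i) \<ge> 3"
    and a_full: "\<And>i. i \<in> {2..k} \<Longrightarrow> vdegree (V (i - 1)) (E (i - 1)) (a i) = card (V (i - 1)) - 1"
    and b_full: "\<And>i. i \<in> {2..k} \<Longrightarrow> vdegree (V i) (E i) (b i) = card (V i) - 1"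
  shows "dom_poly (chain_vertices k V) (chain_edges k E a b) = (\<Prod>i = 1..k. dom_poly (V i) (E i))"
  unfolding chain_vertices_def
proof (rule dom_poly_parts_prod[where I = "{1..k}" and V = V and E = E])
  show "graph (V i) (E i)" if "i \<in> {1..k}" for i
    using that by (rule graphs)
  show "disjoint_family_on V {1..k}"
    unfolding disjoint_family_on_def using parts_disjoint by blast
  show "E i \<subseteq> chain_edges k E a b" if "i \<in> {1..k}" for i
    unfolding chain_edges_def using that by blast
  show "{w, v} \<in> E i"
    if "i \<in> {1..k}" "v \<in> V i" "u \<notin> V i" "{u, v} \<in> chain_edges k E a b" "w \<in> V i" "w \<noteq> v"
    for i u v w
    using chain_edge_port[OF that(1-4)] full_degree_adjacent[OF graphs[OF that(1)] that(2) _ that(5,6)]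
      a_full b_full by fastforce
  show "\<exists>w\<in>V i. \<forall>u. {u, w} \<in> chain_edges k E a b \<longrightarrow> u \<in> V i" if i: "i \<in> {1..k}" for i
  proof -
    have "card {a (i + 1), b i} < card (V i)"
      using three[OF i] by (auto simp: card_insert_if)
    then obtain w where "w \<in> V i" "w \<notin> {a (i + 1), b i}"
      by (metis card_mono finite.emptyI finite.insertI not_le subsetI)
    then show ?thesis using chain_edge_port[OF i] by blast
  qed
  show "{u, v} \<in> E i"
    if "i \<in> {1..k}" "u \<in> V i" "v \<in> V i" "{u, v} \<in> chain_edges k E a b" for i u v
    using that by (rule chain_edge_inner)
qed (use assms(1) in auto)

end

theorem mainTheorem7:
  fixes k :: nat and V :: "nat \<Rightarrow> 'a set" and E :: "nat \<Rightarrow> 'a set set"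
    and a b :: "nat \<Rightarrow> 'a"
  assumes "k \<ge> 2"
    and "\<And>i. i \<in> {1..k} \<Longrightarrow> graph (V i) (E i)"
    and "\<And>i j. i \<in> {1..k} \<Longrightarrow> j \<in> {1..k} \<Longrightarrow> i \<noteq> j \<Longrightarrow> V i \<inter> V j = {}"
    and "\<And>i. i \<in> {1..k} \<Longrightarrow> card (V i) \<ge> 3"
    and "\<exists>v \<in> V 1. vdegree (V 1) (E 1) v = card (V 1) - 1"
    and "\<exists>v \<in> V k. vdegree (V k) (E k) v = card (V k) - 1"
    and "\<And>i. i \<in> {2..k-1} \<Longrightarrow>
           \<exists>u \<in> V i. \<exists>v \<in> V i. u \<noteq> v \<and>
              vdegree (V i) (E i) u = card (V i) - 1 \<and> vdegree (V i) (E i) v = card (V i) - 1"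
    and "\<And>i. i \<in> {2..k} \<Longrightarrow> a i \<in> V (i - 1) \<and> vdegree (V (i - 1)) (E (i - 1)) (a i) = card (V (i - 1)) - 1"
    and "\<And>i. i \<in> {2..k} \<Longrightarrow> b i \<in> V i \<and> vdegree (V i) (E i) (b i) = card (V i) - 1"
  shows "dom_poly (chain_vertices k V) (chain_edges k E a b) = (\<Prod>i = 1..k. dom_poly (V i) (E i))
    \<and> ((\<forall>i \<in> {1..k}. E i = complete_edges (V i)) \<longrightarrow>
         dom_poly (chain_vertices k V) (chain_edges k E a b) = (\<Prod>i = 1..k. [:1, 1:] ^ card (V i) - 1))"
proof -
  interpret graph_chain k V E a b
    using assms(2,3,8,9) by unfold_locales auto
  have product: "dom_poly (chain_vertices k V) (chain_edges k E a b) = (\<Prod>i = 1..k. dom_poly (V i) (E i))"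
    using assms(1,4,8,9) by (intro dom_poly_chain) auto
  have complete: "dom_poly (V i) (complete_edges (V i)) = [:1, 1:] ^ card (V i) - 1"
    if "i \<in> {1..k}" for i
    using graphs[OF that] assms(4)[OF that] by (intro dom_poly_complete_edges) (auto simp: graph_def)
  show ?thesis
  proof (intro conjI impI)
    assume "\<forall>i\<in>{1..k}. E i = complete_edges (V i)"
    then have "(\<Prod>i = 1..k. dom_poly (V i) (E i)) = (\<Prod>i = 1..k. [:1, 1:] ^ card (V i) - 1)"
      using complete by (intro prod.cong) simp_all
    then show "dom_poly (chain_vertices k V) (chain_edges k E a b) = (\<Prod>i = 1..k. [:1, 1:] ^ card (V i) - 1)"
      using product by simp
  qed (fact product)
qed

end
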